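(* Consider the principal–agent model described in the context. For every $a>0$, \[ \sup_{x\in(L(a),\bar x]}\frac{f_a(x\mid a)}{f(x\mid a)}>0. \]
   Context: Model. Effort $a\ge0$; the outcome $X(a)$ is a continuous random variable with support $[L(a),\bar x]$, where $\bar x>0$ is fixed (possibly $+\infty$) and $L:[0,\infty)\to[0,\bar x)$ is nondecreasing on $[0,\infty)$ and continuously differentiable on $(0,\infty)$. $X(a)$ has density $f(x\mid a)$ and cdf $F(x\mid a)$; for each fixed $x\in(L(a),\bar x]$, $f(x\mid a)$ and $F(x\mid a)$ are differentiable in $a>0$ with derivatives $f_a,F_a$, both continuous on $(L(a),\bar x]\times(0,\infty)$, and $F_a<0$ there. Standing assumption (used here): for any nonnegative function $s$ with $\int_{L(a)}^{\bar x}s(x)f(x\mid a)\,dx<\infty$, $\lim_{h\uparrow0}\int_{L(a)}^{\bar x}\frac{f(x\mid a+h)-f(x\mid a)}{h}s(x)\,dx=\int_{L(a)}^{\bar x}\lim_{h\uparrow0}\frac{f(x\mid a+h)-f(x\mid a)}{h}s(x)\,dx$. (The paper's further standing assumptions: $\mathbb{E}[X(a)\mid a]$ is finite and continuous in $a$, $\mathbb{E}[X(a)\mid a]-c(a)\to-\infty$ as $a\to\infty$ for the effort cost $c$, and $a\mapsto\sup_{x\in(L(a),\bar x]}f_a/f$ is continuous on $(0,\infty)$.) *)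

theory Defs
  imports "HOL-Analysis.Analysis"
begin

definition supp_set :: "(real \<Rightarrow> real) \<Rightarrow> ereal \<Rightarrow> real \<Rightarrow> real set" where
  "supp_set L xbar a = {x. L a \<le> x \<and> ereal x \<le> xbar}"

definition osupp_set :: "(real \<Rightarrow> real) \<Rightarrow> ereal \<Rightarrow> real \<Rightarrow> real set" where
  "osupp_set L xbar a = {x. L a < x \<and> ereal x \<le> xbar}"

definition density_support :: "(real \<Rightarrow> real) \<Rightarrow> real set" where
  "density_support g = {x. \<forall>e>0. (\<integral>t\<in>{x-e<..<x+e}. g t \<partial>lborel) > 0}"

text \<open>The model of the context. f x a = f(x|a), F x a = F(x|a), fa x a = f_a(x|a),
  Fa x a = F_a(x|a).\<close>
definition pa_model ::
  "(real \<Rightarrow> real) \<Rightarrow> ereal \<Rightarrow> (real \<Rightarrow> real \<Rightarrow> real) \<Rightarrow> (real \<Rightarrow> real \<Rightarrow> real)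
   \<Rightarrow> (real \<Rightarrow> real \<Rightarrow> real) \<Rightarrow> (real \<Rightarrow> real \<Rightarrow> real) \<Rightarrow> bool" where
  "pa_model L xbar f F fa Fa \<longleftrightarrow>
     xbar > 0 \<and>
     \<comment> \<open>L : [0,\<infinity>) \<rightarrow> [0, xbar), nondecreasing, C^1 on (0,\<infinity>)\<close>
     (\<forall>a\<ge>0. 0 \<le> L a \<and> ereal (L a) < xbar) \<and>
     mono_on {0..} L \<and>
     (\<exists>L'. continuous_on {0<..} L' \<and> (\<forall>a>0. (L has_real_derivative L' a) (at a))) \<and>
     \<comment> \<open>X(a) is continuous with density f(.|a), cdf F(.|a), support [L a, xbar]\<close>
     (\<forall>a\<ge>0. (\<lambda>x. f x a) \<in> borel_measurable lborel \<and> (\<forall>x. 0 \<le> f x a) \<and>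
             integrable lborel (\<lambda>x. f x a) \<and> (\<integral>x. f x a \<partial>lborel) = 1 \<and>
             (\<forall>x. F x a = (\<integral>t\<in>{..x}. f t a \<partial>lborel)) \<and>
             density_support (\<lambda>x. f x a) = supp_set L xbar a) \<and>
     \<comment> \<open>differentiability in a of f and F on (L a, xbar]\<close>
     (\<forall>a>0. \<forall>x\<in>osupp_set L xbar a.
        ((\<lambda>b. f x b) has_real_derivative fa x a) (at a) \<and>
        ((\<lambda>b. F x b) has_real_derivative Fa x a) (at a) \<and>
        Fa x a < 0) \<and>
     continuous_on {(x, a). a > 0 \<and> x \<in> osupp_set L xbar a} (\<lambda>(x, a). fa x a) \<and>
     continuous_on {(x, a). a > 0 \<and> x \<in> osupp_set L xbar a} (\<lambda>(x, a). Fa x a) \<and>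
     \<comment> \<open>standing interchange-of-limit assumption\<close>
     (\<forall>a>0. \<forall>s::real \<Rightarrow> real. s \<in> borel_measurable lborel \<longrightarrow> (\<forall>x. 0 \<le> s x) \<longrightarrow>
        set_integrable lborel (supp_set L xbar a) (\<lambda>x. s x * f x a) \<longrightarrow>
        ((\<lambda>h. \<integral>x\<in>supp_set L xbar a. (f x (a + h) - f x a) / h * s x \<partial>lborel)
           \<longlongrightarrow> (\<integral>x\<in>supp_set L xbar a. fa x a * s x \<partial>lborel)) (at_left 0))"

end

theory Submission
  imports Defs
begin

text \<open>Fix \<open>x\<^sub>0\<close> in \<open>(L(a), xbar]\<close>. Against the indicator of \<open>(x\<^sub>0, \<infinity>)\<close> the density
  \<open>f(\<cdot>|b)\<close> integrates to the tail mass \<open>1 - F(x\<^sub>0|b)\<close>, so by the standing interchange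
  assumption the integral of \<open>f\<^sub>a(\<cdot>|a)\<close> over \<open>(x\<^sub>0, xbar]\<close> is the left derivative
  \<open>-F\<^sub>a(x\<^sub>0|a) > 0\<close>. Hence \<open>f\<^sub>a(t|a) > 0\<close> for some \<open>t > x\<^sub>0\<close>, and there also
  \<open>f(t|a) > 0\<close>: otherwise the nonnegative function \<open>f(t|\<cdot>)\<close> would attain a minimum at
  \<open>a\<close>, forcing \<open>f\<^sub>a(t|a) = 0\<close>.\<close>

lemma AE_zero_if_set_integral_nonpos:
  fixes g :: "real \<Rightarrow> real"
  assumes nonneg: "\<And>x. 0 \<le> g x" and "integrable lborel g"
    and "B \<in> sets lborel" and "(\<integral>x\<in>B. g x \<partial>lborel) \<le> 0"
  shows "AE x in lborel. x \<in> B \<longrightarrow> g x = 0"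
proof -
  have int: "integrable lborel (\<lambda>x. indicator B x *\<^sub>R g x)"
    using assms by (intro integrable_mult_indicator) auto
  have "(\<integral>x. indicator B x *\<^sub>R g x \<partial>lborel) \<ge> 0"
    by (rule integral_nonneg_AE) (simp add: nonneg)
  with assms(4) have "(\<integral>x. indicator B x *\<^sub>R g x \<partial>lborel) = 0"
    unfolding set_lebesgue_integral_def by linarith
  then have "AE x in lborel. indicator B x *\<^sub>R g x = 0"
    using integral_nonneg_eq_0_iff_AE[OF int] by (simp add: nonneg)
  then show ?thesis
    by eventually_elim (auto simp: indicator_def)
qed

lemma AE_zero_outside_density_support:
  fixes g :: "real \<Rightarrow> real"
  assumes nonneg: "\<And>x. 0 \<le> g x" and int: "integrable lborel g"
  shows "AE x in lborel. x \<notin> density_support g \<longrightarrow> g x = 0"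
proof -
  let ?U = "- density_support g"
  have "\<forall>y\<in>?U. \<exists>r>0. (\<integral>t\<in>{y - r<..<y + r}. g t \<partial>lborel) \<le> 0"
    by (auto simp: density_support_def not_less)
  then obtain e where e: "\<And>y. y \<in> ?U \<Longrightarrow> e y > 0 \<and> (\<integral>t\<in>{y - e y<..<y + e y}. g t \<partial>lborel) \<le> 0"
    by metis
  define balls where "balls = (\<lambda>y. {y - e y<..<y + e y}) ` ?U"
  obtain C where C: "C \<subseteq> balls" "countable C" "\<Union>C = \<Union>balls"
  proof (rule Lindelof)
    show "open B" if "B \<in> balls" for B
      using that unfolding balls_def by auto
  qed
  have cover: "?U \<subseteq> \<Union>C"
  proof
    fix y assume "y \<in> ?U"
    then have "y \<in> {y - e y<..<y + e y}" "{y - e y<..<y + e y} \<in> balls"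
      using e unfolding balls_def by auto
    then show "y \<in> \<Union>C"
      using C(3) by blast
  qed
  have "AE x in lborel. \<forall>B\<in>C. x \<in> B \<longrightarrow> g x = 0"
  proof (rule AE_ball_countable'[OF _ C(2)])
    fix B assume "B \<in> C"
    then obtain y where "y \<in> ?U" "B = {y - e y<..<y + e y}"
      using C(1) unfolding balls_def by auto
    then show "AE x in lborel. x \<in> B \<longrightarrow> g x = 0"
      using e by (intro AE_zero_if_set_integral_nonpos nonneg int) auto
  qed
  then show ?thesis
    by (rule eventually_mono) (use cover in blast)
qed

lemma set_integral_pos_imp_ex_pos:
  fixes g :: "'a \<Rightarrow> real"
  assumes "(\<integral>x\<in>A. g x \<partial>M) > 0"
  shows "\<exists>x\<in>A. g x > 0"
proof (rule ccontr)
  assume "\<not> (\<exists>x\<in>A. g x > 0)"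
  then have "(\<integral>x. - (indicator A x *\<^sub>R g x) \<partial>M) \<ge> 0"
    by (intro integral_nonneg_AE AE_I2) (auto simp: indicator_def not_less)
  with assms show False
    unfolding set_lebesgue_integral_def by simp
qed

lemma sets_lborel_supp_set: "supp_set L xbar a \<in> sets lborel"
proof -
  have "supp_set L xbar a = {L a..} \<inter> ereal -` {..xbar}"
    by (auto simp: supp_set_def)
  then show ?thesis
    by simp
qed

lemma pa_model_density:
  assumes "pa_model L xbar f F fa Fa" and "0 \<le> b"
  shows "(\<lambda>x. f x b) \<in> borel_measurable lborel" and "0 \<le> f x b"
    and "integrable lborel (\<lambda>x. f x b)" and "(\<integral>x. f x b \<partial>lborel) = 1"
    and "F x b = (\<integral>t\<in>{..x}. f t b \<partial>lborel)"
    and "density_support (\<lambda>x. f x b) = supp_set L xbar b"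
  using assms unfolding pa_model_def by simp_all

lemma pa_model_derivatives:
  assumes "pa_model L xbar f F fa Fa" and "0 < a" and "x \<in> osupp_set L xbar a"
  shows "((\<lambda>b. f x b) has_real_derivative fa x a) (at a)"
    and "((\<lambda>b. F x b) has_real_derivative Fa x a) (at a)"
    and "Fa x a < 0"
  using assms unfolding pa_model_def by simp_all

lemma pa_model_interchange:
  assumes "pa_model L xbar f F fa Fa" and "0 < a"
    and "s \<in> borel_measurable lborel" and "\<And>x. 0 \<le> s x"
    and "set_integrable lborel (supp_set L xbar a) (\<lambda>x. s x * f x a)"
  shows "((\<lambda>h. \<integral>x\<in>supp_set L xbar a. (f x (a + h) - f x a) / h * s x \<partial>lborel)
           \<longlongrightarrow> (\<integral>x\<in>supp_set L xbar a. fa x a * s x \<partial>lborel)) (at_left 0)"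
  using assms unfolding pa_model_def by blast

lemma osupp_set_nonempty:
  assumes "pa_model L xbar f F fa Fa" and "0 \<le> a"
  obtains x where "x \<in> osupp_set L xbar a"
proof -
  have "ereal (L a) < xbar"
    using assms unfolding pa_model_def by simp
  then obtain x where "L a < x" "ereal x < xbar"
    using ereal_dense2 by force
  then show thesis
    using that[of x] by (simp add: osupp_set_def)
qed

lemma AE_density_zero_beyond_xbar:
  assumes M: "pa_model L xbar f F fa Fa" and b: "0 \<le> b"
  shows "AE x in lborel. xbar < ereal x \<longrightarrow> f x b = 0"
  using AE_zero_outside_density_support[OF pa_model_density(2,3)[OF M b]]
  by eventually_elim (auto simp: pa_model_density(6)[OF M b] supp_set_def)

lemma set_integral_density_tail:
  assumes M: "pa_model L xbar f F fa Fa" and b: "0 \<le> b" and "L a \<le> x0"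
  shows "set_integrable lborel (supp_set L xbar a) (\<lambda>x. indicator {x0<..} x * f x b)"
    and "(\<integral>x\<in>supp_set L xbar a. indicator {x0<..} x * f x b \<partial>lborel) = 1 - F x0 b"
proof -
  note density = pa_model_density[OF M b]
  let ?g = "\<lambda>x. indicator {x0<..} x * f x b"
  have tail_integrable: "integrable lborel ?g"
    using integrable_mult_indicator[of "{x0<..}" lborel "\<lambda>x. f x b"] density(3) by simp
  \<comment> \<open>Restricting to the support at \<open>a\<close> instead of \<open>b\<close> only discards a null set, because
    \<open>f(\<cdot>|b)\<close> vanishes a.e. beyond \<open>xbar\<close> and \<open>x\<^sub>0 \<ge> L(a)\<close>.\<close>
  have ae: "AE x in lborel. indicator (supp_set L xbar a) x *\<^sub>R ?g x = ?g x"
    using AE_density_zero_beyond_xbar[OF M b]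
    by eventually_elim (use \<open>L a \<le> x0\<close> in \<open>auto simp: supp_set_def indicator_def not_le\<close>)
  have restrict_integrable: "set_integrable lborel A (\<lambda>x. f x b)" if "A \<in> sets lborel" for A
    unfolding set_integrable_def using that density(3) by (rule integrable_mult_indicator)
  have measurable: "(\<lambda>x. indicator (supp_set L xbar a) x *\<^sub>R ?g x) \<in> borel_measurable lborel"
    using density(1) sets_lborel_supp_set by measurable
  show "set_integrable lborel (supp_set L xbar a) ?g"
    unfolding set_integrable_def
    by (rule integrable_cong_AE_imp[OF tail_integrable measurable AE_symmetric[OF ae]])
  have "(\<integral>x\<in>supp_set L xbar a. ?g x \<partial>lborel) = (\<integral>x\<in>{x0<..}. f x b \<partial>lborel)"
    unfolding set_lebesgue_integral_def
    using integral_cong_AE[OF measurable borel_measurable_integrable[OF tail_integrable] ae]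
    by (simp add: mult.commute)
  also have "\<dots> = (\<integral>x\<in>{..x0} \<union> {x0<..}. f x b \<partial>lborel) - (\<integral>x\<in>{..x0}. f x b \<partial>lborel)"
    by (subst set_integral_Un) (auto intro: restrict_integrable)
  also have "\<dots> = 1 - F x0 b"
  proof -
    have "{..x0} \<union> {x0<..} = (UNIV :: real set)"
      by auto
    then show ?thesis
      using density(4,5) by (simp add: set_lebesgue_integral_def)
  qed
  finally show "(\<integral>x\<in>supp_set L xbar a. ?g x \<partial>lborel) = 1 - F x0 b" .
qed

lemma set_integral_deriv_density_tail:
  assumes M: "pa_model L xbar f F fa Fa" and a: "0 < a" and x0: "x0 \<in> osupp_set L xbar a"
  shows "(\<integral>x\<in>supp_set L xbar a. fa x a * indicator {x0<..} x \<partial>lborel) = - Fa x0 a"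
proof -
  let ?S = "supp_set L xbar a" and ?s = "indicator {x0<..} :: real \<Rightarrow> real"
  let ?Q = "\<lambda>h. \<integral>x\<in>?S. (f x (a + h) - f x a) / h * ?s x \<partial>lborel"
  have "L a \<le> x0"
    using x0 by (simp add: osupp_set_def)
  note tail = set_integral_density_tail[OF M _ this]
  have "(?Q \<longlongrightarrow> (\<integral>x\<in>?S. fa x a * ?s x \<partial>lborel)) (at_left 0)"
  proof (rule pa_model_interchange[OF M a])
    show "set_integrable lborel ?S (\<lambda>x. ?s x * f x a)"
      using tail(1) a by simp
  qed simp_all
  moreover have "(?Q \<longlongrightarrow> - Fa x0 a) (at_left 0)"
  proof (rule Lim_transform_eventually)
    have "((\<lambda>h. (F x0 (a + h) - F x0 a) / h) \<longlongrightarrow> Fa x0 a) (at 0)"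
      using pa_model_derivatives(2)[OF M a x0] by (simp add: DERIV_def)
    then have "((\<lambda>h. (F x0 (a + h) - F x0 a) / h) \<longlongrightarrow> Fa x0 a) (at_left 0)"
      by (rule tendsto_mono[rotated]) (simp add: at_le)
    then show "((\<lambda>h. - ((F x0 (a + h) - F x0 a) / h)) \<longlongrightarrow> - Fa x0 a) (at_left 0)"
      by (rule tendsto_minus)
    have "\<forall>\<^sub>F h in at_left 0. h > - a"
      using a by (intro eventually_at_leftI[of "- a"]) auto
    then show "\<forall>\<^sub>F h in at_left 0. - ((F x0 (a + h) - F x0 a) / h) = ?Q h"
    proof eventually_elim
      case (elim h)
      have "?Q h = (\<integral>x\<in>?S. (?s x * f x (a + h) - ?s x * f x a) / h \<partial>lborel)"
        by (rule set_lebesgue_integral_cong[OF sets_lborel_supp_set]) (simp add: field_simps)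
      also have "\<dots> = ((\<integral>x\<in>?S. ?s x * f x (a + h) \<partial>lborel) - (\<integral>x\<in>?S. ?s x * f x a \<partial>lborel)) / h"
        using elim a tail(1)[of "a + h"] tail(1)[of a] by simp
      also have "\<dots> = - ((F x0 (a + h) - F x0 a) / h)"
        using elim a tail(2)[of "a + h"] tail(2)[of a] by (simp add: minus_divide_left)
      finally show ?case ..
    qed
  qed
  ultimately show ?thesis
    by (rule tendsto_unique[rotated 1]) simp
qed

lemma density_pos_if_deriv_nonzero:
  assumes M: "pa_model L xbar f F fa Fa" and a: "0 < a" and x: "x \<in> osupp_set L xbar a"
    and "fa x a \<noteq> 0"
  shows "0 < f x a"
proof (rule ccontr)
  assume "\<not> 0 < f x a"
  then have "f x a = 0"
    using pa_model_density(2)[OF M, of a x] a by simp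
  have "\<forall>b. \<bar>a - b\<bar> < a \<longrightarrow> f x a \<le> f x b"
  proof (intro allI impI)
    fix b assume "\<bar>a - b\<bar> < a"
    then have "0 \<le> b"
      by linarith
    then show "f x a \<le> f x b"
      using \<open>f x a = 0\<close> pa_model_density(2)[OF M] by simp
  qed
  then have "fa x a = 0"
    using DERIV_local_min[OF pa_model_derivatives(1)[OF M a x] a] by blast
  with \<open>fa x a \<noteq> 0\<close> show False ..
qed

theorem lemmaA1:
  fixes L :: "real \<Rightarrow> real" and xbar :: ereal
    and f F fa Fa :: "real \<Rightarrow> real \<Rightarrow> real" and a :: real
  assumes "pa_model L xbar f F fa Fa"
    and "a > 0"
  shows "(SUP x\<in>osupp_set L xbar a. ereal (fa x a / f x a)) > 0"
proof -
  obtain x0 where x0: "x0 \<in> osupp_set L xbar a"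
    using osupp_set_nonempty[OF assms(1) less_imp_le[OF assms(2)]] .
  have "(\<integral>x\<in>supp_set L xbar a. fa x a * indicator {x0<..} x \<partial>lborel) > 0"
    using set_integral_deriv_density_tail[OF assms x0] pa_model_derivatives(3)[OF assms x0]
    by simp
  then obtain t where "t \<in> supp_set L xbar a" and pos: "fa t a * indicator {x0<..} t > 0"
    using set_integral_pos_imp_ex_pos by blast
  then have "x0 < t"
    by (cases "x0 < t") simp_all
  with pos have fa_pos: "fa t a > 0"
    by simp
  from x0 \<open>x0 < t\<close> \<open>t \<in> supp_set L xbar a\<close> have t: "t \<in> osupp_set L xbar a"
    by (simp add: supp_set_def osupp_set_def)
  have "f t a > 0"
    using density_pos_if_deriv_nonzero[OF assms t] fa_pos by simp
  with fa_pos have "0 < ereal (fa t a / f t a)"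
    by simp
  also have "\<dots> \<le> (SUP x\<in>osupp_set L xbar a. ereal (fa x a / f x a))"
    using t by (rule SUP_upper)
  finally show ?thesis .
qed

end
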